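(* Let $d,k\in\mathbb{N}$ and $R=\mathbb{R}\langle s^{(1)},\dots,s^{(k-1)}\rangle$. The exponential $\exp:\mathfrak{g}_{d,k}\to\mathcal{G}_{d,k}$ and the logarithm $\log:\mathcal{G}_{d,k}\to\mathfrak{g}_{d,k}$ are each represented by an element of $s^{(k)}+R$, while the group inversion $\mathcal{G}_{d,k}\to\mathcal{G}_{d,k}$, $\mathbf{z}\mapsto\mathbf{z}^{-1}$, is represented by an element of $-s^{(k)}+R$.
   Context: $T_{d,k}=\bigoplus_{\ell=0}^k(\mathbb{R}^d)^{\otimes\ell}$ is the truncated tensor algebra (elements $\mathbf{z}=\mathbf{z}^{(0)}\oplus\dots\oplus\mathbf{z}^{(k)}$) with product the bilinear extension of the tensor product of levels, set to $0$ when the total level exceeds $k$. $\mathfrak{g}_{d,k}$ is the smallest Lie subalgebra (commutator bracket) of $T_{d,k}$ containing $e_1,\dots,e_d\in\mathbb{R}^d$; $\exp(\mathbf{z})=\sum_{\ell=0}^k\mathbf{z}^{\otimes\ell}/\ell!$; $\mathcal{G}_{d,k}=\exp(\mathfrak{g}_{d,k})$, a group; $\log(\mathbf{s})=\sum_{\ell\ge1}\frac{(-1)^{\ell+1}}{\ell}(\mathbf{s}-1)^{\otimes\ell}$. $\mathbb{R}\langle s^{(1)},\dots,s^{(k)}\rangle$ is the free associative $\mathbb{R}$-algebra on non-commuting variables $s^{(1)},\dots,s^{(k)}$ (constants included). For $f$ in it, $\mathrm{eval}_f:T_{d,k}\to T_{d,k}$ is obtained by substituting $\mathbf{z}^{(i)}$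 (viewed in $T_{d,k}$) for $s^{(i)}$ and computing in $T_{d,k}$, with constants mapped to multiples of the unit $1$. A map $\phi$ defined on a subset of $T_{d,k}$ is represented by $f$ if $\phi=\mathrm{eval}_f$ on that subset. *)

theory Defs
  imports Complex_Main
begin

text \<open>A tensor of level l over R^d is a real function
on words (lists) of length l over the alphabet {0..<d}; an element of T_{d,k} is a
function on words, vanishing outside words of length at most k over {0..<d}.\<close>

definition tens :: "nat \<Rightarrow> nat \<Rightarrow> (nat list \<Rightarrow> real) set" where
  "tens d k = {z. \<forall>w. z w \<noteq> 0 \<longrightarrow> length w \<le> k \<and> set w \<subseteq> {..<d}}"

definition tone :: "nat list \<Rightarrow> real" where
  "tone = (\<lambda>w. if w = [] then 1 else 0)"

definition tadd :: "(nat list \<Rightarrow> real) \<Rightarrow> (nat list \<Rightarrow> real) \<Rightarrow> nat list \<Rightarrow> real" where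
  "tadd x y = (\<lambda>w. x w + y w)"

definition tscale :: "real \<Rightarrow> (nat list \<Rightarrow> real) \<Rightarrow> nat list \<Rightarrow> real" where
  "tscale c x = (\<lambda>w. c * x w)"

definition tmul :: "nat \<Rightarrow> (nat list \<Rightarrow> real) \<Rightarrow> (nat list \<Rightarrow> real) \<Rightarrow> nat list \<Rightarrow> real" where
  "tmul k x y = (\<lambda>w. if length w \<le> k
      then (\<Sum>i\<le>length w. x (take i w) * y (drop i w)) else 0)"

definition tbracket :: "nat \<Rightarrow> (nat list \<Rightarrow> real) \<Rightarrow> (nat list \<Rightarrow> real) \<Rightarrow> nat list \<Rightarrow> real" where
  "tbracket k x y = (\<lambda>w. tmul k x y w - tmul k y x w)"

definition tbasis :: "nat \<Rightarrow> nat list \<Rightarrow> real" where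
  "tbasis i = (\<lambda>w. if w = [i] then 1 else 0)"

inductive_set lie_alg :: "nat \<Rightarrow> nat \<Rightarrow> (nat list \<Rightarrow> real) set" for d k where
  gen: "i < d \<Longrightarrow> tbasis i \<in> lie_alg d k"
| zero: "(\<lambda>w. 0) \<in> lie_alg d k"
| add: "x \<in> lie_alg d k \<Longrightarrow> y \<in> lie_alg d k \<Longrightarrow> tadd x y \<in> lie_alg d k"
| scale: "x \<in> lie_alg d k \<Longrightarrow> tscale c x \<in> lie_alg d k"
| bracket: "x \<in> lie_alg d k \<Longrightarrow> y \<in> lie_alg d k \<Longrightarrow> tbracket k x y \<in> lie_alg d k"

primrec tpow :: "nat \<Rightarrow> (nat list \<Rightarrow> real) \<Rightarrow> nat \<Rightarrow> nat list \<Rightarrow> real" where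
  "tpow k z 0 = tone"
| "tpow k z (Suc n) = tmul k z (tpow k z n)"

definition texp :: "nat \<Rightarrow> (nat list \<Rightarrow> real) \<Rightarrow> nat list \<Rightarrow> real" where
  "texp k z = (\<lambda>w. \<Sum>l\<le>k. tpow k z l w / fact l)"

text \<open>Logarithm; on G_{d,k} the level-0 part of s - 1 vanishes, so terms with l > k are 0.\<close>
definition tlog :: "nat \<Rightarrow> (nat list \<Rightarrow> real) \<Rightarrow> nat list \<Rightarrow> real" where
  "tlog k s = (\<lambda>w. \<Sum>l\<in>{1..k}. ((-1) ^ (l + 1) / real l) * tpow k (\<lambda>v. s v - tone v) l w)"

definition group_G :: "nat \<Rightarrow> nat \<Rightarrow> (nat list \<Rightarrow> real) set" where
  "group_G d k = texp k ` lie_alg d k"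

definition tinv :: "nat \<Rightarrow> nat \<Rightarrow> (nat list \<Rightarrow> real) \<Rightarrow> nat list \<Rightarrow> real" where
  "tinv d k z = (THE y. y \<in> tens d k \<and> tmul k z y = tone \<and> tmul k y z = tone)"

text \<open>Free associative algebra R<s^(1),...,s^(m)>: finitely supported real functions on
words (lists) over {1..m}; the word [i1,...,ir] is the monomial s^(i1)...s^(ir),
the empty word is the constant 1.\<close>
definition free_alg :: "nat \<Rightarrow> (nat list \<Rightarrow> real) set" where
  "free_alg m = {f. finite {w. f w \<noteq> 0} \<and> (\<forall>w. f w \<noteq> 0 \<longrightarrow> set w \<subseteq> {1..m})}"

definition svar :: "nat \<Rightarrow> nat list \<Rightarrow> real" where
  "svar i = (\<lambda>w. if w = [i] then 1 else 0)"

definition tproj :: "nat \<Rightarrow> (nat list \<Rightarrow> real) \<Rightarrow> nat list \<Rightarrow> real" where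
  "tproj i z = (\<lambda>w. if length w = i then z w else 0)"

definition meval :: "nat \<Rightarrow> nat list \<Rightarrow> (nat list \<Rightarrow> real) \<Rightarrow> nat list \<Rightarrow> real" where
  "meval k u z = foldr (\<lambda>i acc. tmul k (tproj i z) acc) u tone"

definition eval_poly :: "nat \<Rightarrow> (nat list \<Rightarrow> real) \<Rightarrow> (nat list \<Rightarrow> real) \<Rightarrow> nat list \<Rightarrow> real" where
  "eval_poly k f z = (\<lambda>v. \<Sum>u\<in>{u. f u \<noteq> 0}. f u * meval k u z v)"

end

theory Submission
  imports Defs
begin

(*
  Each of the three maps is a truncated power series sum_{l<=k} c_l x^l in x = z - z^(0), the sum
  of the levels z^(1), ..., z^(k): for exp take x = z, for log take x = s - 1, and the inverse of
  s = 1 + x is the Neumann series sum_l (-x)^l, which terminates because x is nilpotent.  Expanding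
  x^l into monomials in the levels, every monomial containing z^(k) together with a further factor
  lies above level k and vanishes.  Hence s^(k) only survives in the linear term, with coefficient
  c_1 = 1 for exp and log and c_1 = -1 for the inverse; all other monomials only involve
  s^(1), ..., s^(k-1).
*)

lemma tmul_nonzeroE:
  assumes "tmul k x y w \<noteq> 0"
  obtains i where "length w \<le> k" "i \<le> length w" "x (take i w) \<noteq> 0" "y (drop i w) \<noteq> 0"
proof -
  have len: "length w \<le> k" and "(\<Sum>i\<le>length w. x (take i w) * y (drop i w)) \<noteq> 0"
    using assms by (auto simp: tmul_def split: if_splits)
  then obtain i where "i \<le> length w" "x (take i w) * y (drop i w) \<noteq> 0"
    by (meson atMost_iff sum.not_neutral_contains_not_neutral)
  with len show ?thesis
    using that by simp
qed

lemma tmul_Nil: "tmul k x y [] = x [] * y []"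
  by (simp add: tmul_def)

lemma tmul_sum_left: "tmul k (\<lambda>w. \<Sum>i\<in>I. f i w) y = (\<lambda>w. \<Sum>i\<in>I. tmul k (f i) y w)"
  by (auto simp: tmul_def sum_distrib_right intro!: ext sum.swap)

lemma tmul_sum_right: "tmul k y (\<lambda>w. \<Sum>i\<in>I. f i w) = (\<lambda>w. \<Sum>i\<in>I. tmul k y (f i) w)"
  by (auto simp: tmul_def sum_distrib_left intro!: ext sum.swap)

lemma tmul_scale_left: "tmul k (\<lambda>w. c * x w) y = (\<lambda>w. c * tmul k x y w)"
  by (auto simp: tmul_def sum_distrib_left mult.assoc intro!: ext)

lemma tmul_scale_right: "tmul k y (\<lambda>w. c * x w) = (\<lambda>w. c * tmul k y x w)"
  by (auto simp: tmul_def sum_distrib_left mult.left_commute intro!: ext)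

lemma tmul_add_left: "tmul k (\<lambda>w. x w + x' w) y = (\<lambda>w. tmul k x y w + tmul k x' y w)"
  by (auto simp: tmul_def sum.distrib algebra_simps intro!: ext)

lemma tmul_add_right: "tmul k y (\<lambda>w. x w + x' w) = (\<lambda>w. tmul k y x w + tmul k y x' w)"
  by (auto simp: tmul_def sum.distrib algebra_simps intro!: ext)

lemma tone_tens: "tone \<in> tens d k"
  by (simp add: tens_def tone_def)

lemma tens_lincomb:
  assumes "x \<in> tens d k" "y \<in> tens d k"
  shows "(\<lambda>w. a * x w + b * y w) \<in> tens d k"
proof -
  have "a * x w + b * y w \<noteq> 0 \<Longrightarrow> x w \<noteq> 0 \<or> y w \<noteq> 0" for w
    by auto
  then show ?thesis
    using assms unfolding tens_def by blast
qed

lemma tens_sum: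
  assumes "\<And>i. i \<in> I \<Longrightarrow> f i \<in> tens d k"
  shows "(\<lambda>w. \<Sum>i\<in>I. c i * f i w) \<in> tens d k"
  unfolding tens_def
proof (intro CollectI allI impI)
  fix w
  assume "(\<Sum>i\<in>I. c i * f i w) \<noteq> 0"
  then obtain i where "i \<in> I" "c i * f i w \<noteq> 0"
    by (rule sum.not_neutral_contains_not_neutral)
  then show "length w \<le> k \<and> set w \<subseteq> {..<d}"
    using assms unfolding tens_def by auto
qed

lemma tmul_tens:
  assumes "x \<in> tens d k" "y \<in> tens d k"
  shows "tmul k x y \<in> tens d k"
  unfolding tens_def
proof (intro CollectI allI impI)
  fix w
  assume "tmul k x y w \<noteq> 0"
  then obtain i where len: "length w \<le> k" and "x (take i w) \<noteq> 0" "y (drop i w) \<noteq> 0"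
    by (rule tmul_nonzeroE)
  then have "set (take i w) \<union> set (drop i w) \<subseteq> {..<d}"
    using assms unfolding tens_def by blast
  with len show "length w \<le> k \<and> set w \<subseteq> {..<d}"
    by (simp flip: set_append)
qed

lemma tmul_tone_left:
  assumes "y \<in> tens d k"
  shows "tmul k tone y = y"
proof
  fix w
  have "(\<Sum>i\<le>length w. tone (take i w) * y (drop i w)) = (\<Sum>i\<in>{0}. tone (take i w) * y (drop i w))"
    by (rule sum.mono_neutral_right) (auto simp: tone_def)
  then show "tmul k tone y w = y w"
    using assms by (auto simp: tmul_def tens_def tone_def)
qed

lemma tmul_tone_right:
  assumes "y \<in> tens d k"
  shows "tmul k y tone = y"
proof
  fix w
  have "(\<Sum>i\<le>length w. y (take i w) * tone (drop i w))
      = (\<Sum>i\<in>{length w}. y (take i w) * tone (drop i w))"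
    by (rule sum.mono_neutral_right) (auto simp: tone_def)
  then show "tmul k y tone w = y w"
    using assms by (auto simp: tmul_def tens_def tone_def)
qed

lemma tmul_tmul_left_eq:
  assumes "length w \<le> k"
  shows "tmul k (tmul k x y) z w
    = (\<Sum>j\<le>length w. \<Sum>i\<le>j. x (take i w) * y (drop i (take j w)) * z (drop j w))"
proof -
  have "tmul k x y (take j w) = (\<Sum>i\<le>j. x (take i w) * y (drop i (take j w)))"
    if "j \<le> length w" for j
    using that assms by (simp add: tmul_def min_def)
  then show ?thesis
    using assms by (simp add: tmul_def sum_distrib_right)
qed

lemma tmul_tmul_right_eq:
  assumes "length w \<le> k"
  shows "tmul k x (tmul k y z) w
    = (\<Sum>i\<le>length w. \<Sum>j\<in>{i..length w}. x (take i w) * y (drop i (take j w)) * z (drop j w))"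
proof -
  have "tmul k y z (drop i w) = (\<Sum>j\<in>{i..length w}. y (drop i (take j w)) * z (drop j w))"
    if "i \<le> length w" for i
  proof -
    have "tmul k y z (drop i w) = (\<Sum>m\<le>length w - i. y (take m (drop i w)) * z (drop (m + i) w))"
      using assms by (simp add: tmul_def)
    also have "\<dots> = (\<Sum>j\<in>{i..length w}. y (drop i (take j w)) * z (drop j w))"
      using that by (simp add: sum.atLeastAtMost_shift_0[of i] atMost_atLeast0 drop_take add.commute)
    finally show ?thesis .
  qed
  then show ?thesis
    using assms unfolding tmul_def[of k x "tmul k y z"]
    by (simp add: sum_distrib_left mult.assoc)
qed

lemma tmul_assoc: "tmul k (tmul k x y) z = tmul k x (tmul k y z)"
proof
  fix w
  show "tmul k (tmul k x y) z w = tmul k x (tmul k y z) w"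
  proof (cases "length w \<le> k")
    case True
    define n where "n = length w"
    define F where "F j i = x (take i w) * y (drop i (take j w)) * z (drop j w)" for j i
    have "(\<Sum>j\<le>n. \<Sum>i\<le>j. F j i) = (\<Sum>j\<le>n. \<Sum>i | i \<in> {..n} \<and> i \<le> j. F j i)"
      by (intro sum.cong refl) auto
    also have "\<dots> = (\<Sum>i\<le>n. \<Sum>j | j \<in> {..n} \<and> i \<le> j. F j i)"
      by (rule sum.swap_restrict) simp_all
    also have "\<dots> = (\<Sum>i\<le>n. \<Sum>j\<in>{i..n}. F j i)"
      by (intro sum.cong refl) auto
    finally show ?thesis
      using True by (simp add: tmul_tmul_left_eq tmul_tmul_right_eq F_def n_def)
  qed (simp add: tmul_def)
qed

lemma tpow_tens: "x \<in> tens d k \<Longrightarrow> tpow k x l \<in> tens d k"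
  by (induction l) (simp_all add: tone_tens tmul_tens)

lemma tpow_Suc_right: "x \<in> tens d k \<Longrightarrow> tpow k x (Suc l) = tmul k (tpow k x l) x"
  by (induction l) (simp_all add: tmul_tone_left tmul_tone_right flip: tmul_assoc)

lemma tpow_eq_0_if_length_less: "x [] = 0 \<Longrightarrow> length w < l \<Longrightarrow> tpow k x l w = 0"
proof (induction l arbitrary: w)
  case (Suc l)
  show ?case
  proof (rule ccontr)
    assume "tpow k x (Suc l) w \<noteq> 0"
    then obtain i where "x (take i w) \<noteq> 0" "tpow k x l (drop i w) \<noteq> 0" "i \<le> length w"
      by (auto elim: tmul_nonzeroE)
    moreover from this(1) have "i \<noteq> 0"
      using Suc.prems(1) by (metis take0)
    ultimately have "length (drop i w) < l"
      using Suc.prems(2) by auto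
    then show False
      using Suc.IH[OF Suc.prems(1)] \<open>tpow k x l (drop i w) \<noteq> 0\<close> by blast
  qed
qed simp

lemma tpow_nilpotent: "x [] = 0 \<Longrightarrow> tpow k x (Suc k) = (\<lambda>w. 0)"
proof
  fix w
  assume "x [] = 0"
  show "tpow k x (Suc k) w = 0"
  proof (cases "length w \<le> k")
    case True
    then show ?thesis
      using tpow_eq_0_if_length_less[of x w "Suc k" k] \<open>x [] = 0\<close> by simp
  qed (simp add: tmul_def)
qed

lemma tinv_eqI:
  assumes "y \<in> tens d k" "tmul k s y = tone" "tmul k y s = tone"
  shows "tinv d k s = y"
  unfolding tinv_def
proof (rule the_equality)
  show "y \<in> tens d k \<and> tmul k s y = tone \<and> tmul k y s = tone"
    using assms by simp
next
  fix y'
  assume y': "y' \<in> tens d k \<and> tmul k s y' = tone \<and> tmul k y' s = tone"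
  then have "y' = tmul k y' (tmul k s y)"
    using assms(2) tmul_tone_right[of y' d k] by simp
  also have "\<dots> = tmul k (tmul k y' s) y"
    by (simp add: tmul_assoc)
  also have "\<dots> = y"
    using y' assms(1) by (simp add: tmul_tone_left)
  finally show "y' = y" .
qed

lemma tinv_one_plus:
  assumes "a \<in> tens d k" "a [] = 0"
  shows "tinv d k (\<lambda>w. tone w + a w) = (\<lambda>w. \<Sum>l\<le>k. (-1) ^ l * tpow k a l w)"
proof (rule tinv_eqI)
  let ?y = "\<lambda>w. \<Sum>l\<le>k. (-1) ^ l * tpow k a l w"
  show "?y \<in> tens d k"
    by (intro tens_sum tpow_tens assms(1))
  have telescope: "(\<lambda>w. ?y w + (\<Sum>l\<le>k. (-1) ^ l * tpow k a (Suc l) w)) = tone"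
  proof
    fix w
    define f where "f l = (-1) ^ l * tpow k a l w" for l
    have "?y w + (\<Sum>l\<le>k. (-1) ^ l * tpow k a (Suc l) w) = (\<Sum>l\<le>k. f l - f (Suc l))"
      by (simp add: f_def sum.distrib)
    also have "\<dots> = f 0 - f (Suc k)"
      by (rule sum_telescope)
    also have "\<dots> = tone w"
      using tpow_nilpotent[of a k] assms(2) by (simp add: f_def)
    finally show "?y w + (\<Sum>l\<le>k. (-1) ^ l * tpow k a (Suc l) w) = tone w" .
  qed
  show "tmul k (\<lambda>w. tone w + a w) ?y = tone"
    using telescope tmul_tone_left[OF tpow_tens[OF assms(1)]]
    by (simp add: tmul_add_left tmul_sum_right tmul_scale_right)
  show "tmul k ?y (\<lambda>w. tone w + a w) = tone"
    using telescope tmul_tone_right[OF tpow_tens[OF assms(1)]] tpow_Suc_right[OF assms(1), symmetric]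
    by (simp add: tmul_add_right tmul_sum_left tmul_scale_left)
qed

lemma lie_alg_tens: "z \<in> lie_alg d k \<Longrightarrow> 1 \<le> k \<Longrightarrow> z \<in> tens d k"
proof (induction rule: lie_alg.induct)
  case (add x y)
  then show ?case using tens_lincomb[of x d k y 1 1] by (simp add: tadd_def)
next
  case (scale x c)
  then show ?case using tens_lincomb[of x d k x c 0] by (simp add: tscale_def)
next
  case (bracket x y)
  then show ?case using tens_lincomb[OF tmul_tens tmul_tens, of x d k y y x 1 "-1"]
    by (simp add: tbracket_def)
qed (auto simp: tens_def tbasis_def)

lemma lie_alg_Nil: "z \<in> lie_alg d k \<Longrightarrow> z [] = 0"
  by (induction rule: lie_alg.induct) (simp_all add: tbasis_def tadd_def tscale_def tbracket_def tmul_Nil)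

lemma texp_tens: "z \<in> tens d k \<Longrightarrow> texp k z \<in> tens d k"
  using tens_sum[of "{..k}" "tpow k z" d k "\<lambda>l. 1 / fact l"] by (simp add: tpow_tens texp_def)

lemma texp_Nil: "z [] = 0 \<Longrightarrow> texp k z [] = 1"
proof -
  assume "z [] = 0"
  then have "texp k z [] = (\<Sum>l\<in>{0}. tpow k z l [] / fact l)"
    unfolding texp_def by (intro sum.mono_neutral_right) (auto simp: tpow_eq_0_if_length_less)
  then show ?thesis
    by (simp add: tone_def)
qed

(* z minus its level-0 part, written as the evaluation of s^(1) + ... + s^(k) so that its powers
   expand into the monomials meval k u z. *)
definition tpos_part :: "nat \<Rightarrow> (nat list \<Rightarrow> real) \<Rightarrow> nat list \<Rightarrow> real" where
  "tpos_part k z = (\<lambda>w. \<Sum>i\<in>{1..k}. tproj i z w)"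

lemma tpos_part_eq:
  assumes "z \<in> tens d k"
  shows "tpos_part k z = (\<lambda>w. z w - z [] * tone w)"
proof
  fix w
  show "tpos_part k z w = z w - z [] * tone w"
  proof (cases "w \<noteq> [] \<and> length w \<le> k")
    case True
    then have "tpos_part k z w = (\<Sum>i\<in>{length w}. tproj i z w)"
      unfolding tpos_part_def by (intro sum.mono_neutral_right) (auto simp: tproj_def Suc_le_eq)
    then show ?thesis
      using True by (simp add: tproj_def tone_def)
  next
    case False
    then show ?thesis
      using assms by (auto simp: tpos_part_def tproj_def tone_def tens_def)
  qed
qed

lemma tpos_part_Nil: "tpos_part k z [] = 0"
  by (simp add: tpos_part_def tproj_def)

lemma tpos_part_tens: "z \<in> tens d k \<Longrightarrow> tpos_part k z \<in> tens d k"
  using tens_lincomb[of z d k tone 1 "- z []"] by (simp add: tpos_part_eq tone_tens)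

lemma group_G_tens: "1 \<le> k \<Longrightarrow> s \<in> group_G d k \<Longrightarrow> s \<in> tens d k"
  by (auto simp: group_G_def intro!: texp_tens lie_alg_tens)

lemma tpos_part_group_G:
  assumes "1 \<le> k" "s \<in> group_G d k"
  shows "tpos_part k s = (\<lambda>w. s w - tone w)"
proof -
  have "s [] = 1"
    using assms(2) by (auto simp: group_G_def intro: texp_Nil lie_alg_Nil)
  then show ?thesis
    using tpos_part_eq[OF group_G_tens[OF assms]] by simp
qed

lemma meval_Cons: "meval k (i # u) z = tmul k (tproj i z) (meval k u z)"
  by (simp add: meval_def)

lemma tpow_tpos_part_eq_sum_meval:
  "tpow k (tpos_part k z) l = (\<lambda>w. \<Sum>u | set u \<subseteq> {1..k} \<and> length u = l. meval k u z w)"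
proof (induction l)
  case 0
  have "{u. set u \<subseteq> {1..k} \<and> length u = 0} = {[]}"
    by auto
  then show ?case
    by (simp add: meval_def)
next
  case (Suc l)
  let ?W = "\<lambda>l. {u. set u \<subseteq> {1..k} \<and> length u = l}"
  have "tpow k (tpos_part k z) (Suc l) = (\<lambda>w. \<Sum>i\<in>{1..k}. \<Sum>u\<in>?W l. meval k (i # u) z w)"
    using Suc by (simp add: tpos_part_def tmul_sum_left tmul_sum_right meval_Cons)
  also have "\<dots> = (\<lambda>w. \<Sum>u\<in>?W (Suc l). meval k u z w)"
  proof
    fix w
    have "(\<Sum>u\<in>?W (Suc l). meval k u z w) = (\<Sum>(u, i)\<in>?W l \<times> {1..k}. meval k (i # u) z w)"
      unfolding lists_length_Suc_eq by (subst sum.reindex) (auto simp: inj_on_def split_beta)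
    also have "\<dots> = (\<Sum>u\<in>?W l. \<Sum>i\<in>{1..k}. meval k (i # u) z w)"
      by (simp add: sum.cartesian_product)
    also have "\<dots> = (\<Sum>i\<in>{1..k}. \<Sum>u\<in>?W l. meval k (i # u) z w)"
      by (rule sum.swap)
    finally show "(\<Sum>i\<in>{1..k}. \<Sum>u\<in>?W l. meval k (i # u) z w) = (\<Sum>u\<in>?W (Suc l). meval k u z w)"
      by simp
  qed
  finally show ?case .
qed

lemma meval_nonzeroD:
  "meval k u z w \<noteq> 0 \<Longrightarrow> length w = sum_list u \<and> (u \<noteq> [] \<longrightarrow> length w \<le> k)"
proof (induction u arbitrary: w)
  case Nil
  then show ?case by (simp add: meval_def tone_def split: if_splits)
next
  case (Cons i u)
  then obtain j where len: "length w \<le> k" "j \<le> length w"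
    and "tproj i z (take j w) \<noteq> 0" "meval k u z (drop j w) \<noteq> 0"
    by (auto simp: meval_Cons elim: tmul_nonzeroE)
  then have "length (take j w) = i" "length (drop j w) = sum_list u"
    using Cons.IH[OF \<open>meval k u z (drop j w) \<noteq> 0\<close>] by (simp_all add: tproj_def split: if_splits)
  with len show ?case
    by simp
qed

lemma length_le_sum_list: "set u \<subseteq> {1..} \<Longrightarrow> length u \<le> sum_list u"
  by (induction u) auto

lemma meval_eq_0_if_contains_top_level:
  assumes "set u \<subseteq> {1..}" "k \<in> set u" "u \<noteq> [k]"
  shows "meval k u z w = 0"
proof (rule ccontr)
  assume "meval k u z w \<noteq> 0"
  then have "length w = sum_list u \<and> (u \<noteq> [] \<longrightarrow> length w \<le> k)"
    by (rule meval_nonzeroD)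
  with assms(2) have len: "length w = sum_list u" "length w \<le> k"
    by auto
  obtain xs ys where u: "u = xs @ k # ys"
    using split_list[OF assms(2)] by blast
  have "length xs \<le> sum_list xs" "length ys \<le> sum_list ys"
    using assms(1) u by (simp_all add: length_le_sum_list)
  moreover have "0 < length xs + length ys"
    using assms(3) u by auto
  moreover have "sum_list u = sum_list xs + k + sum_list ys"
    using u by simp
  ultimately have "k < sum_list u"
    by linarith
  then show False
    using len by simp
qed

(* The expansion of sum_{l<=k} c_l (s^(1) + ... + s^(k-1))^l in the free algebra: every word of
   length l over {1..k-1} has coefficient c_l. *)
definition series_poly :: "nat \<Rightarrow> (nat \<Rightarrow> real) \<Rightarrow> nat list \<Rightarrow> real" where
  "series_poly k c u = (if set u \<subseteq> {1..k - 1} \<and> length u \<le> k then c (length u) else 0)"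

lemma series_poly_free_alg: "series_poly k c \<in> free_alg (k - 1)"
proof -
  have "{u. series_poly k c u \<noteq> 0} \<subseteq> {u. set u \<subseteq> {1..k - 1} \<and> length u \<le> k}"
    by (auto simp: series_poly_def split: if_splits)
  then have "finite {u. series_poly k c u \<noteq> 0}"
    by (rule finite_subset) (simp add: finite_lists_length_le)
  then show ?thesis
    by (auto simp: free_alg_def series_poly_def split: if_splits)
qed

lemma eval_poly_eq_sum:
  assumes "finite S" "{u. f u \<noteq> 0} \<subseteq> S"
  shows "eval_poly k f z w = (\<Sum>u\<in>S. f u * meval k u z w)"
  unfolding eval_poly_def using assms by (intro sum.mono_neutral_left) auto

lemma series_poly_coeff_meval:
  assumes "1 \<le> k" "c 1 = \<sigma>" "set u \<subseteq> {1..k}" "length u \<le> k"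
  shows "(\<sigma> * svar k u + series_poly k c u) * meval k u z w = c (length u) * meval k u z w"
proof (cases "k \<in> set u")
  case True
  then consider "u = [k]" | "meval k u z w = 0"
    using assms(3) meval_eq_0_if_contains_top_level[of u k z w] by (auto simp: subset_iff)
  then show ?thesis
    by cases (use assms in \<open>auto simp: svar_def series_poly_def\<close>)
next
  case False
  have "set u \<subseteq> {1..k - 1}"
  proof
    fix x
    assume "x \<in> set u"
    with assms(3) False have "1 \<le> x" "x \<le> k" "x \<noteq> k"
      by auto
    then show "x \<in> {1..k - 1}"
      by simp
  qed
  with False assms(4) show ?thesis
    by (auto simp: svar_def series_poly_def)
qed

lemma eval_poly_series:
  assumes "1 \<le> k" "c 1 = \<sigma>"
  shows "eval_poly k (\<lambda>u. \<sigma> * svar k u + series_poly k c u) z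
    = (\<lambda>w. \<Sum>l\<le>k. c l * tpow k (tpos_part k z) l w)"
proof
  fix w
  define S where "S = {u. set u \<subseteq> {1..k} \<and> length u \<le> k}"
  let ?f = "\<lambda>u. \<sigma> * svar k u + series_poly k c u"
  have "finite S"
    unfolding S_def by (simp add: finite_lists_length_le)
  have "{1..k - 1} \<subseteq> {1..k}" "set [k] \<subseteq> {1..k}" "length [k] \<le> k"
    using assms(1) by auto
  moreover have "?f u \<noteq> 0 \<Longrightarrow> u = [k] \<or> set u \<subseteq> {1..k - 1} \<and> length u \<le> k" for u
    by (auto simp: svar_def series_poly_def split: if_splits)
  ultimately have supp: "{u. ?f u \<noteq> 0} \<subseteq> S"
    unfolding S_def by blast
  have "eval_poly k ?f z w = (\<Sum>u\<in>S. c (length u) * meval k u z w)"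
    unfolding eval_poly_eq_sum[OF \<open>finite S\<close> supp]
    using series_poly_coeff_meval[of k c \<sigma>] assms by (intro sum.cong) (auto simp: S_def)
  also have "\<dots> = (\<Sum>l\<le>k. \<Sum>u | u \<in> S \<and> length u = l. c (length u) * meval k u z w)"
    using \<open>finite S\<close> by (intro sum.group[symmetric]) (auto simp: S_def)
  also have "\<dots> = (\<Sum>l\<le>k. c l * tpow k (tpos_part k z) l w)"
    by (intro sum.cong refl)
      (auto simp: tpow_tpos_part_eq_sum_meval sum_distrib_left S_def intro!: sum.cong)
  finally show "eval_poly k ?f z w = (\<Sum>l\<le>k. c l * tpow k (tpos_part k z) l w)" .
qed

lemma texp_represented:
  assumes "1 \<le> k"
  shows "\<exists>g \<in> free_alg (k - 1). \<forall>z \<in> lie_alg d k. eval_poly k (\<lambda>u. svar k u + g u) z = texp k z"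
proof (intro bexI ballI)
  fix z
  assume z: "z \<in> lie_alg d k"
  have "tpos_part k z = z"
    using tpos_part_eq[OF lie_alg_tens[OF z assms]] lie_alg_Nil[OF z] by simp
  then show "eval_poly k (\<lambda>u. svar k u + series_poly k (\<lambda>l. 1 / fact l) u) z = texp k z"
    using eval_poly_series[OF assms, of "\<lambda>l. 1 / fact l" 1 z] by (simp add: texp_def)
qed (rule series_poly_free_alg)

lemma tlog_represented:
  assumes "1 \<le> k"
  shows "\<exists>g \<in> free_alg (k - 1). \<forall>s \<in> group_G d k. eval_poly k (\<lambda>u. svar k u + g u) s = tlog k s"
proof (intro bexI ballI)
  fix s
  assume s: "s \<in> group_G d k"
  define c where "c l = (if l = 0 then 0 else (-1) ^ (l + 1) / real l)" for l
  have "eval_poly k (\<lambda>u. svar k u + series_poly k c u) s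
      = (\<lambda>w. \<Sum>l\<le>k. c l * tpow k (\<lambda>v. s v - tone v) l w)"
    using eval_poly_series[OF assms, of c 1 s] tpos_part_group_G[OF assms s] by (simp add: c_def)
  also have "\<dots> = tlog k s"
    unfolding tlog_def c_def by (intro ext sum.mono_neutral_cong_right) auto
  finally show "eval_poly k (\<lambda>u. svar k u + series_poly k c u) s = tlog k s" .
qed (rule series_poly_free_alg)

lemma tinv_represented:
  assumes "1 \<le> k"
  shows "\<exists>g \<in> free_alg (k - 1). \<forall>s \<in> group_G d k. eval_poly k (\<lambda>u. - svar k u + g u) s = tinv d k s"
proof (intro bexI ballI)
  fix s
  assume s: "s \<in> group_G d k"
  let ?a = "tpos_part k s"
  have "s = (\<lambda>w. tone w + ?a w)"
    using tpos_part_group_G[OF assms s] by simp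
  then have "tinv d k s = (\<lambda>w. \<Sum>l\<le>k. (-1) ^ l * tpow k ?a l w)"
    using tinv_one_plus[OF tpos_part_tens[OF group_G_tens[OF assms s]] tpos_part_Nil] by simp
  also have "\<dots> = eval_poly k (\<lambda>u. - svar k u + series_poly k (\<lambda>l. (-1) ^ l) u) s"
    using eval_poly_series[OF assms, of "\<lambda>l. (-1) ^ l" "-1" s] by simp
  finally show "eval_poly k (\<lambda>u. - svar k u + series_poly k (\<lambda>l. (-1) ^ l) u) s = tinv d k s"
    by simp
qed (rule series_poly_free_alg)

theorem lemma3p3:
  fixes d k :: nat
  assumes "k \<ge> 1"
  shows "(\<exists>g \<in> free_alg (k - 1). \<forall>z \<in> lie_alg d k.
            eval_poly k (\<lambda>u. svar k u + g u) z = texp k z)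
       \<and> (\<exists>g \<in> free_alg (k - 1). \<forall>s \<in> group_G d k.
            eval_poly k (\<lambda>u. svar k u + g u) s = tlog k s)
       \<and> (\<exists>g \<in> free_alg (k - 1). \<forall>z \<in> group_G d k.
            eval_poly k (\<lambda>u. - svar k u + g u) z = tinv d k z)"
  using texp_represented[OF assms] tlog_represented[OF assms] tinv_represented[OF assms] by blast

end
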